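(* For any sequence of groups $(G_n)_{n\in\mathbb N}$, the archipelago group is a direct limit $$\mathcal A(G_n)=\varinjlim_k \circledast_{i\ge k}G_i,$$ where the bonding maps are the quotient maps $\circledast_{i\ge k}G_i\to(\circledast_{i\ge k}G_i)/\langle\langle G_k\rangle\rangle\cong\circledast_{i\ge k+1}G_i$ (i.e. the maps deleting all letters from $G_k$).
   Context: For a sequence of groups $(G_n)_{n\in\mathbb N}$, an infinite word is a map $w:L\to\bigsqcup_n (G_n\setminus\{1\})$ from a countable linearly ordered set $L$ such that $w^{-1}(G_n)$ is finite for every $n$. Two infinite words are equivalent if for every $m$ their restrictions to the letters from $G_1,\dots,G_m$ represent the same element of $G_1*\cdots*G_m$. The topologist's product $\circledast_n G_n$ is the group of equivalence classes, with multiplication induced by concatenation and inversion by reversing the order and inverting each letter; $\circledast_{i\ge k}G_i$ is the same construction for the subsequence $(G_i)_{i\ge k}$. The free product $*_n G_n$ is the subgroup of classes of finite words. The archipelago group is $\mathcal A(G_n):=\circledast_n G_n/\langle\langle *_n G_n\rangle\rangle$, $\langle\langle\cdot\rangle\rangle$ denoting normal closure. *)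

theory Defs
  imports "HOL-Algebra.Algebra"
begin

(* Letters: pairs (n, g) meaning the element g of G n.
   Infinite words: a subset L of the rationals (every countable linear order
   embeds into Q) together with a labelling w of L by letters. *)

type_synonym 'a letter = "nat \<times> 'a"
type_synonym 'a iword = "rat set \<times> (rat \<Rightarrow> 'a letter)"

definition is_word :: "(nat \<Rightarrow> 'a monoid) \<Rightarrow> 'a iword \<Rightarrow> bool" where
  "is_word G u \<longleftrightarrow>
     (\<forall>x\<in>fst u. snd (snd u x) \<in> carrier (G (fst (snd u x))) - {\<one>\<^bsub>G (fst (snd u x))\<^esub>}) \<and>
     (\<forall>n. finite {x\<in>fst u. fst (snd u x) = n})"

inductive fp_step :: "(nat \<Rightarrow> 'a monoid) \<Rightarrow> 'a letter list \<Rightarrow> 'a letter list \<Rightarrow> bool"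
  for G where
  merge: "a \<in> carrier (G n) \<Longrightarrow> b \<in> carrier (G n) \<Longrightarrow>
     fp_step G (xs @ (n, a) # (n, b) # ys) (xs @ (n, a \<otimes>\<^bsub>G n\<^esub> b) # ys)"
| delete: "fp_step G (xs @ (n, \<one>\<^bsub>G n\<^esub>) # ys) (xs @ ys)"

definition fp_eq :: "(nat \<Rightarrow> 'a monoid) \<Rightarrow> 'a letter list \<Rightarrow> 'a letter list \<Rightarrow> bool" where
  "fp_eq G = (symclp (fp_step G))\<^sup>*\<^sup>*"

definition restr :: "nat \<Rightarrow> 'a iword \<Rightarrow> 'a letter list" where
  "restr m u = map (snd u) (sorted_list_of_set {x\<in>fst u. fst (snd u x) \<le> m})"

definition word_equiv :: "(nat \<Rightarrow> 'a monoid) \<Rightarrow> 'a iword \<Rightarrow> 'a iword \<Rightarrow> bool" where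
  "word_equiv G u v \<longleftrightarrow> (\<forall>m. fp_eq G (restr m u) (restr m v))"

(* order embedding Q -> (-1,1) and its inverse *)
definition emb :: "rat \<Rightarrow> rat" where "emb x = x / (1 + \<bar>x\<bar>)"
definition emb_inv :: "rat \<Rightarrow> rat" where "emb_inv y = y / (1 - \<bar>y\<bar>)"

definition concat_word :: "'a iword \<Rightarrow> 'a iword \<Rightarrow> 'a iword" where
  "concat_word u v =
     ((\<lambda>x. emb x - 1) ` fst u \<union> (\<lambda>x. emb x + 1) ` fst v,
      \<lambda>y. if y < 0 then snd u (emb_inv (y + 1)) else snd v (emb_inv (y - 1)))"

definition empty_word :: "'a iword" where
  "empty_word = ({}, \<lambda>_. undefined)"

definition word_class :: "(nat \<Rightarrow> 'a monoid) \<Rightarrow> 'a iword \<Rightarrow> 'a iword set" where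
  "word_class G u = {v. is_word G v \<and> word_equiv G u v}"

definition TP :: "(nat \<Rightarrow> 'a monoid) \<Rightarrow> ('a iword set) monoid" where
  "TP G = \<lparr> carrier = {word_class G u | u. is_word G u},
           monoid.mult = (\<lambda>A B. word_class G (concat_word (SOME u. u \<in> A) (SOME v. v \<in> B))),
           one = word_class G empty_word \<rparr>"

definition FP :: "(nat \<Rightarrow> 'a monoid) \<Rightarrow> 'a iword set set" where
  "FP G = {word_class G u | u. is_word G u \<and> finite (fst u)}"

definition normal_closure :: "('b, 'c) monoid_scheme \<Rightarrow> 'b set \<Rightarrow> 'b set" where
  "normal_closure H S =
     generate H {g \<otimes>\<^bsub>H\<^esub> s \<otimes>\<^bsub>H\<^esub> inv\<^bsub>H\<^esub> g | g s. g \<in> carrier H \<and> s \<in> S}"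

definition archipelago :: "(nat \<Rightarrow> 'a monoid) \<Rightarrow> ('a iword set set) monoid" where
  "archipelago G = TP G Mod normal_closure (TP G) (FP G)"

definition TPk :: "(nat \<Rightarrow> 'a monoid) \<Rightarrow> nat \<Rightarrow> ('a iword set) monoid" where
  "TPk G k = TP (\<lambda>i. G (i + k))"

(* the copy of G_k (single-letter words at index 0) inside TPk G k *)
definition factor_image :: "(nat \<Rightarrow> 'a monoid) \<Rightarrow> nat \<Rightarrow> 'a iword set set" where
  "factor_image G k =
     {word_class (\<lambda>i. G (i + k)) ({0}, \<lambda>_. (0, g)) | g. g \<in> carrier (G k) - {\<one>\<^bsub>G k\<^esub>}}"

definition del_word :: "'a iword \<Rightarrow> 'a iword" where
  "del_word u = ({x\<in>fst u. fst (snd u x) \<noteq> 0}, \<lambda>x. (fst (snd u x) - 1, snd (snd u x)))"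

definition phi :: "(nat \<Rightarrow> 'a monoid) \<Rightarrow> nat \<Rightarrow> 'a iword set \<Rightarrow> 'a iword set" where
  "phi G k Y = word_class (\<lambda>i. G (i + Suc k)) (del_word (SOME u. u \<in> Y))"

definition shift_word :: "nat \<Rightarrow> 'a iword \<Rightarrow> 'a iword" where
  "shift_word k u = (fst u, \<lambda>x. (fst (snd u x) + k, snd (snd u x)))"

definition psi :: "(nat \<Rightarrow> 'a monoid) \<Rightarrow> nat \<Rightarrow> 'a iword set \<Rightarrow> 'a iword set set" where
  "psi G k Y = normal_closure (TP G) (FP G) #>\<^bsub>TP G\<^esub> word_class G (shift_word k (SOME u. u \<in> Y))"

end

theory Submission
  imports Defs
begin

(* Deleting the letters of some factors and renumbering the remaining ones is compatible with
   the finite restrictions that define word equivalence, so it induces homomorphisms between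
   topologist's products: deleting G_k gives the bonding map phi_k, shifting indices by k
   gives psi_k. A word in the kernel of phi_k is, modulo conjugates of its finitely many
   G_k-letters, a word without G_k-letters, and such a word is the shift of its own image
   under phi_k, hence trivial. Likewise psi_(k+1) (phi_k Y) and psi_k Y differ only by the
   G_k-letters, which are finite words. A compatible family f kills every finite word,
   because f_k factors through f_(k+j) after deleting j kinds of letters; so f_0 descends to
   the archipelago group, uniquely because psi_0 is onto. *)

lemma fp_eq_refl [simp]: "fp_eq G xs xs"
  by (simp add: fp_eq_def)

lemma fp_eq_sym: "fp_eq G xs ys \<Longrightarrow> fp_eq G ys xs"
  unfolding fp_eq_def by (rule rtranclp_symclp_sym)

lemma fp_eq_trans: "fp_eq G xs ys \<Longrightarrow> fp_eq G ys zs \<Longrightarrow> fp_eq G xs zs"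
  unfolding fp_eq_def by (rule rtranclp_trans)

lemma fp_step_imp_fp_eq: "fp_step G xs ys \<Longrightarrow> fp_eq G xs ys"
  unfolding fp_eq_def by (simp add: r_into_rtranclp symclp_def)

lemma fp_eq_lift:
  assumes lift: "\<And>xs ys. fp_step G xs ys \<Longrightarrow> fp_eq H (f xs) (f ys)"
    and "fp_eq G xs ys"
  shows "fp_eq H (f xs) (f ys)"
  using \<open>fp_eq G xs ys\<close> unfolding fp_eq_def[of G]
proof (induction rule: rtranclp_induct)
  case (step ys zs)
  then have "fp_eq H (f ys) (f zs)"
    by (auto simp: symclp_def intro: lift fp_eq_sym)
  with step.IH show ?case by (rule fp_eq_trans)
qed simp

lemma fp_step_append_context:
  "fp_step G xs ys \<Longrightarrow> fp_step G (as @ xs @ bs) (as @ ys @ bs)"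
proof (induction rule: fp_step.induct)
  case (merge a n b xs ys)
  then show ?case using fp_step.merge[of a G n b "as @ xs" "ys @ bs"] by simp
next
  case (delete xs n ys)
  then show ?case using fp_step.delete[of G "as @ xs" n "ys @ bs"] by simp
qed

lemma fp_eq_append_context: "fp_eq G xs ys \<Longrightarrow> fp_eq G (as @ xs @ bs) (as @ ys @ bs)"
  by (rule fp_eq_lift) (auto intro: fp_step_imp_fp_eq fp_step_append_context)

lemma fp_eq_append: "fp_eq G xs ys \<Longrightarrow> fp_eq G xs' ys' \<Longrightarrow> fp_eq G (xs @ xs') (ys @ ys')"
  using fp_eq_append_context[of G xs ys "[]" xs'] fp_eq_append_context[of G xs' ys' ys "[]"]
  by (auto intro: fp_eq_trans)

definition relabel_letters :: "(nat \<Rightarrow> bool) \<Rightarrow> (nat \<Rightarrow> nat) \<Rightarrow> 'a letter list \<Rightarrow> 'a letter list" where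
  "relabel_letters P \<sigma> xs = map (\<lambda>(n, a). (\<sigma> n, a)) (filter (\<lambda>l. P (fst l)) xs)"

lemma relabel_letters_append [simp]:
  "relabel_letters P \<sigma> (xs @ ys) = relabel_letters P \<sigma> xs @ relabel_letters P \<sigma> ys"
  by (simp add: relabel_letters_def)

lemma relabel_letters_Cons [simp]:
  "relabel_letters P \<sigma> ((n, a) # xs) = (if P n then [(\<sigma> n, a)] else []) @ relabel_letters P \<sigma> xs"
  by (simp add: relabel_letters_def)

lemma fp_eq_relabel_letters:
  assumes factors: "\<And>n. P n \<Longrightarrow> H (\<sigma> n) = G n" and "fp_eq G xs ys"
  shows "fp_eq H (relabel_letters P \<sigma> xs) (relabel_letters P \<sigma> ys)"
proof (rule fp_eq_lift[OF _ \<open>fp_eq G xs ys\<close>])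
  fix xs ys assume "fp_step G xs ys"
  then show "fp_eq H (relabel_letters P \<sigma> xs) (relabel_letters P \<sigma> ys)"
  proof (induction rule: fp_step.induct)
    case (merge a n b xs ys)
    then show ?case
      using fp_step.merge[of a H "\<sigma> n" b "relabel_letters P \<sigma> xs" "relabel_letters P \<sigma> ys"] factors
      by (auto intro: fp_step_imp_fp_eq)
  next
    case (delete xs n ys)
    then show ?case
      using fp_step.delete[of H "relabel_letters P \<sigma> xs" "\<sigma> n" "relabel_letters P \<sigma> ys"] factors
      by (auto intro: fp_step_imp_fp_eq)
  qed
qed

definition inv_letter :: "(nat \<Rightarrow> 'a monoid) \<Rightarrow> 'a letter \<Rightarrow> 'a letter" where
  "inv_letter G l = (fst l, inv\<^bsub>G (fst l)\<^esub> snd l)"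

lemma fp_eq_inv_letter_cancel:
  assumes "group (G n)" "a \<in> carrier (G n)"
  shows "fp_eq G [inv_letter G (n, a), (n, a)] []"
proof -
  interpret group "G n" by fact
  have "fp_step G ([] @ (n, inv\<^bsub>G n\<^esub> a) # (n, a) # []) ([] @ (n, inv\<^bsub>G n\<^esub> a \<otimes>\<^bsub>G n\<^esub> a) # [])"
    using assms(2) by (intro fp_step.merge) auto
  moreover have "fp_step G ([] @ (n, \<one>\<^bsub>G n\<^esub>) # []) ([] @ [])"
    by (rule fp_step.delete)
  ultimately show ?thesis
    using assms(2) by (auto simp: inv_letter_def intro: fp_step_imp_fp_eq fp_eq_trans)
qed

lemma fp_eq_inv_cancel:
  assumes "\<And>n. group (G n)" "\<forall>l\<in>set xs. snd l \<in> carrier (G (fst l))"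
  shows "fp_eq G (rev (map (inv_letter G) xs) @ xs) []"
  using assms(2)
proof (induction xs)
  case (Cons x xs)
  have "fp_eq G (rev (map (inv_letter G) xs) @ [inv_letter G x, x] @ xs) (rev (map (inv_letter G) xs) @ [] @ xs)"
    using Cons.prems fp_eq_inv_letter_cancel[where n="fst x" and a="snd x", OF assms(1)]
    by (intro fp_eq_append_context) simp
  with Cons show ?case by (auto intro: fp_eq_trans)
qed simp

section \<open>Infinite words and their restrictions\<close>

lemma emb_abs_less_1: "\<bar>emb x\<bar> < 1"
  by (simp add: emb_def abs_divide)

lemma emb_inv_emb [simp]: "emb_inv (emb x) = x"
  by (simp add: emb_def emb_inv_def abs_divide field_simps)

lemma emb_strict_mono: "strict_mono emb"
proof (rule strict_monoI)
  fix x y :: rat assume "x < y"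
  have "x * (1 + \<bar>y\<bar>) < y * (1 + \<bar>x\<bar>)"
  proof (cases "0 \<le> x")
    case True
    with \<open>x < y\<close> show ?thesis by (simp add: algebra_simps)
  next
    case False
    show ?thesis
    proof (cases "0 \<le> y")
      case True
      have "x * (1 + \<bar>y\<bar>) < 0" using False by (simp add: mult_neg_pos)
      also have "0 \<le> y * (1 + \<bar>x\<bar>)" using True by simp
      finally show ?thesis .
    qed (use False \<open>x < y\<close> in \<open>simp add: algebra_simps\<close>)
  qed
  then show "emb x < emb y"
    by (simp add: emb_def field_simps)
qed

lemma sorted_list_of_set_eqI:
  fixes A :: "'b::linorder set"
  assumes "finite A" "sorted_wrt (<) xs" "set xs = A"
  shows "sorted_list_of_set A = xs"
  using assms by (metis strict_sorted_equal sorted_list_of_set.strict_sorted_key_list_of_set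
      set_sorted_list_of_set)

lemma sorted_list_of_set_filter:
  fixes A :: "'b::linorder set"
  assumes "finite A"
  shows "sorted_list_of_set {x\<in>A. P x} = filter P (sorted_list_of_set A)"
  by (rule sorted_list_of_set_eqI) (use assms in \<open>auto simp: sorted_wrt_filter\<close>)

lemma sorted_list_of_set_image_strict_mono:
  fixes A :: "'b::linorder set" and f :: "'b \<Rightarrow> 'c::linorder"
  assumes "finite A" "strict_mono f"
  shows "sorted_list_of_set (f ` A) = map f (sorted_list_of_set A)"
proof (rule sorted_list_of_set_eqI)
  have "sorted_wrt (<) (sorted_list_of_set A)" by simp
  then show "sorted_wrt (<) (map f (sorted_list_of_set A))"
    unfolding sorted_wrt_map using assms(2)
    by (auto intro: sorted_wrt_mono_rel[where P="(<)"] simp: strict_mono_def)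
qed (use assms in auto)

lemma sorted_list_of_set_Un_less:
  fixes A :: "'b::linorder set"
  assumes "finite A" "finite B" "\<And>a b. a \<in> A \<Longrightarrow> b \<in> B \<Longrightarrow> a < b"
  shows "sorted_list_of_set (A \<union> B) = sorted_list_of_set A @ sorted_list_of_set B"
  by (rule sorted_list_of_set_eqI) (use assms in \<open>auto simp: sorted_wrt_append\<close>)

lemma sorted_list_of_set_uminus:
  fixes A :: "'b::linordered_ab_group_add set"
  assumes "finite A"
  shows "sorted_list_of_set (uminus ` A) = rev (map uminus (sorted_list_of_set A))"
proof (rule sorted_list_of_set_eqI)
  have "sorted_wrt (<) (sorted_list_of_set A)" by simp
  then show "sorted_wrt (<) (rev (map uminus (sorted_list_of_set A)))"
    unfolding sorted_wrt_rev sorted_wrt_map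
    by (auto intro: sorted_wrt_mono_rel[where P="(<)"])
qed (use assms in auto)

definition restr_positions :: "nat \<Rightarrow> 'a iword \<Rightarrow> rat set" where
  "restr_positions m u = {x\<in>fst u. fst (snd u x) \<le> m}"

lemma restr_eq: "restr m u = map (snd u) (sorted_list_of_set (restr_positions m u))"
  by (simp add: restr_def restr_positions_def)

lemma finite_restr_positions: "is_word G u \<Longrightarrow> finite (restr_positions m u)"
proof -
  assume "is_word G u"
  moreover have "restr_positions m u = (\<Union>n\<le>m. {x\<in>fst u. fst (snd u x) = n})"
    unfolding restr_positions_def by auto
  ultimately show ?thesis unfolding is_word_def by auto
qed

lemma restr_cong:
  assumes "fst u = fst v" "\<And>x. x \<in> fst u \<Longrightarrow> snd u x = snd v x"
  shows "restr m u = restr m v"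
proof -
  have eq: "restr_positions m u = restr_positions m v"
    using assms unfolding restr_positions_def by auto
  show ?thesis
  proof (cases "finite (restr_positions m v)")
    case True
    then show ?thesis
      using assms unfolding restr_eq eq by (auto simp: restr_positions_def intro!: map_cong)
  qed (simp add: restr_eq eq)
qed

lemma restr_empty_word [simp]: "restr m empty_word = []"
  by (simp add: restr_def empty_word_def)

lemma emb_minus_1_neg: "emb x - 1 < 0"
  using emb_abs_less_1[of x] by linarith

lemma emb_plus_1_pos: "0 < emb x + 1"
  using emb_abs_less_1[of x] by linarith

lemma concat_word_left: "snd (concat_word u v) (emb x - 1) = snd u x"
  using emb_minus_1_neg[of x] by (simp add: concat_word_def)

lemma concat_word_right: "snd (concat_word u v) (emb x + 1) = snd v x"
  using emb_plus_1_pos[of x] by (simp add: concat_word_def)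

lemma restr_concat_word:
  assumes "is_word G u" "is_word G v"
  shows "restr m (concat_word u v) = restr m u @ restr m v"
proof -
  let ?f = "\<lambda>x::rat. emb x - 1" and ?g = "\<lambda>x::rat. emb x + 1"
  have mono: "strict_mono ?f" "strict_mono ?g"
    using emb_strict_mono by (auto simp: strict_mono_def)
  have sep: "a < b" if "a \<in> ?f ` A" "b \<in> ?g ` B" for a b and A B :: "rat set"
    using that by (auto intro: less_trans[OF emb_minus_1_neg emb_plus_1_pos])
  have positions: "restr_positions m (concat_word u v) =
      ?f ` restr_positions m u \<union> ?g ` restr_positions m v"
  proof -
    have "fst (concat_word u v) = ?f ` fst u \<union> ?g ` fst v"
      by (simp add: concat_word_def)
    then show ?thesis
      unfolding restr_positions_def by (auto simp: concat_word_left concat_word_right)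
  qed
  have "sorted_list_of_set (restr_positions m (concat_word u v)) =
      map ?f (sorted_list_of_set (restr_positions m u)) @ map ?g (sorted_list_of_set (restr_positions m v))"
  proof -
    have fin: "finite (restr_positions m u)" "finite (restr_positions m v)"
      using assms by (simp_all add: finite_restr_positions)
    show ?thesis
      unfolding positions
      by (subst sorted_list_of_set_Un_less)
        (use fin sep in \<open>simp_all add: sorted_list_of_set_image_strict_mono mono\<close>)
  qed
  then show ?thesis
    by (simp add: restr_eq comp_def concat_word_left concat_word_right)
qed

definition rev_word :: "(nat \<Rightarrow> 'a monoid) \<Rightarrow> 'a iword \<Rightarrow> 'a iword" where
  "rev_word G u = (uminus ` fst u, \<lambda>x. inv_letter G (snd u (- x)))"

lemma restr_rev_word:
  assumes "is_word G u"
  shows "restr m (rev_word G u) = rev (map (inv_letter G) (restr m u))"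
proof -
  have "restr_positions m (rev_word G u) = uminus ` restr_positions m u"
    unfolding restr_positions_def rev_word_def inv_letter_def by force
  then show ?thesis
    using finite_restr_positions[OF assms]
    by (simp add: restr_eq sorted_list_of_set_uminus rev_map rev_word_def comp_def)
qed

definition relabel_word :: "(nat \<Rightarrow> bool) \<Rightarrow> (nat \<Rightarrow> nat) \<Rightarrow> 'a iword \<Rightarrow> 'a iword" where
  "relabel_word P \<sigma> u = ({x\<in>fst u. P (fst (snd u x))}, \<lambda>x. (\<sigma> (fst (snd u x)), snd (snd u x)))"

lemma restr_relabel_word:
  assumes "is_word G u" "\<And>n. P n \<Longrightarrow> \<sigma> n \<le> m \<Longrightarrow> n \<le> M"
  shows "restr m (relabel_word P \<sigma> u) = relabel_letters (\<lambda>n. P n \<and> \<sigma> n \<le> m) \<sigma> (restr M u)"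
proof -
  have "restr_positions m (relabel_word P \<sigma> u) =
      {x\<in>restr_positions M u. P (fst (snd u x)) \<and> \<sigma> (fst (snd u x)) \<le> m}"
    using assms(2) unfolding restr_positions_def relabel_word_def by auto
  then show ?thesis
    using finite_restr_positions[OF assms(1)]
    unfolding restr_eq relabel_letters_def
    by (simp add: sorted_list_of_set_filter filter_map comp_def, simp add: relabel_word_def case_prod_beta)
qed

definition restrict_word :: "'a iword \<Rightarrow> rat set \<Rightarrow> 'a iword" where
  "restrict_word u S = (fst u \<inter> S, snd u)"

definition letter_word :: "'a letter \<Rightarrow> 'a iword" where
  "letter_word l = ({0}, \<lambda>_. l)"

lemma restr_letter_word: "restr m (letter_word l) = (if fst l \<le> m then [l] else [])"
  by (simp add: restr_def letter_word_def)

lemma restr_split: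
  assumes "is_word G u"
  shows "restr m u = restr m (restrict_word u {x. x < p}) @
     (if p \<in> fst u \<and> fst (snd u p) \<le> m then [snd u p] else []) @
     restr m (restrict_word u {x. p < x})"
proof -
  let ?L = "restr_positions m (restrict_word u {x. x < p})"
    and ?P = "restr_positions m (restrict_word u {p})"
    and ?R = "restr_positions m (restrict_word u {x. p < x})"
  have parts: "restr_positions m u = ?L \<union> (?P \<union> ?R)"
    unfolding restr_positions_def restrict_word_def by auto
  have fin: "finite ?L" "finite ?P" "finite ?R"
    using finite_restr_positions[OF assms, of m] unfolding parts by simp_all
  have "sorted_list_of_set (?P \<union> ?R) = sorted_list_of_set ?P @ sorted_list_of_set ?R"
    using fin by (intro sorted_list_of_set_Un_less) (auto simp: restr_positions_def restrict_word_def)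
  moreover have "sorted_list_of_set (?L \<union> (?P \<union> ?R)) = sorted_list_of_set ?L @ sorted_list_of_set (?P \<union> ?R)"
    using fin by (intro sorted_list_of_set_Un_less) (auto simp: restr_positions_def restrict_word_def)
  ultimately have "sorted_list_of_set (restr_positions m u) =
      sorted_list_of_set ?L @ sorted_list_of_set ?P @ sorted_list_of_set ?R"
    unfolding parts by simp
  moreover have "?P = (if p \<in> fst u \<and> fst (snd u p) \<le> m then {p} else {})"
    by (auto simp: restr_positions_def restrict_word_def)
  ultimately show ?thesis
    unfolding restr_eq by (simp add: restrict_word_def)
qed

lemma is_word_empty_word [simp]: "is_word G empty_word"
  by (simp add: is_word_def empty_word_def)

lemma is_word_concat_word:
  assumes "is_word G u" "is_word G v"
  shows "is_word G (concat_word u v)"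
proof -
  let ?f = "\<lambda>x::rat. emb x - 1" and ?g = "\<lambda>x::rat. emb x + 1"
  have positions: "fst (concat_word u v) = ?f ` fst u \<union> ?g ` fst v"
    by (simp add: concat_word_def)
  have "{x\<in>fst (concat_word u v). fst (snd (concat_word u v) x) = n} =
      ?f ` {x\<in>fst u. fst (snd u x) = n} \<union> ?g ` {x\<in>fst v. fst (snd v x) = n}" for n
    unfolding positions by (auto simp: concat_word_left concat_word_right)
  then show ?thesis
    using assms unfolding is_word_def by (auto simp: positions concat_word_left concat_word_right)
qed

lemma is_word_rev_word:
  assumes "\<And>n. group (G n)" "is_word G u"
  shows "is_word G (rev_word G u)"
proof -
  have "{x\<in>fst (rev_word G u). fst (snd (rev_word G u) x) = n} = uminus ` {x\<in>fst u. fst (snd u x) = n}"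
    for n
    unfolding rev_word_def inv_letter_def by force
  moreover have "inv\<^bsub>G n\<^esub> a \<in> carrier (G n) - {\<one>\<^bsub>G n\<^esub>}" if "a \<in> carrier (G n) - {\<one>\<^bsub>G n\<^esub>}" for n a
  proof -
    interpret group "G n" by (rule assms(1))
    show ?thesis using that by (auto simp: inv_eq_one_eq)
  qed
  ultimately show ?thesis
    using assms(2) unfolding is_word_def by (auto simp: rev_word_def inv_letter_def)
qed

lemma is_word_relabel_word:
  assumes "inj_on \<sigma> {n. P n}" "\<And>n. P n \<Longrightarrow> H (\<sigma> n) = G n" "is_word G u"
  shows "is_word H (relabel_word P \<sigma> u)"
proof -
  have "{x\<in>fst (relabel_word P \<sigma> u). fst (snd (relabel_word P \<sigma> u) x) = n} =
      (\<Union>n'\<in>\<sigma> -` {n} \<inter> {n. P n}. {x\<in>fst u. fst (snd u x) = n'})" for n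
    by (auto simp: relabel_word_def)
  moreover have "finite (\<sigma> -` {n} \<inter> {n. P n})" for n
    using assms(1) by (rule finite_vimage_IntI[rotated]) simp
  ultimately show ?thesis
    using assms(2,3) unfolding is_word_def by (auto simp: relabel_word_def)
qed

lemma is_word_restrict_word: "is_word G u \<Longrightarrow> is_word G (restrict_word u S)"
  unfolding is_word_def restrict_word_def by (auto elim: finite_subset[rotated])

lemma is_word_letter_word:
  "snd l \<in> carrier (G (fst l)) - {\<one>\<^bsub>G (fst l)\<^esub>} \<Longrightarrow> is_word G (letter_word l)"
  unfolding is_word_def letter_word_def by auto

section \<open>The topologist's product\<close>

lemma word_equiv_refl [simp]: "word_equiv G u u"
  by (simp add: word_equiv_def)

lemma word_equiv_sym: "word_equiv G u v \<Longrightarrow> word_equiv G v u"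
  by (simp add: word_equiv_def fp_eq_sym)

lemma word_equiv_trans: "word_equiv G u v \<Longrightarrow> word_equiv G v w \<Longrightarrow> word_equiv G u w"
  unfolding word_equiv_def by (blast intro: fp_eq_trans)

lemma word_equivI: "(\<And>m. restr m u = restr m v) \<Longrightarrow> word_equiv G u v"
  by (simp add: word_equiv_def)

lemma word_equiv_concat_word:
  assumes "is_word G u" "is_word G v" "is_word G u'" "is_word G v'"
    and "word_equiv G u u'" "word_equiv G v v'"
  shows "word_equiv G (concat_word u v) (concat_word u' v')"
  using assms unfolding word_equiv_def by (simp add: restr_concat_word fp_eq_append)

lemma word_class_self: "is_word G u \<Longrightarrow> u \<in> word_class G u"
  by (simp add: word_class_def)

lemma word_class_eqI: "word_equiv G u v \<Longrightarrow> word_class G u = word_class G v"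
  unfolding word_class_def by (auto intro: word_equiv_trans word_equiv_sym)

lemma word_class_eq_iff: "is_word G v \<Longrightarrow> word_class G u = word_class G v \<longleftrightarrow> word_equiv G u v"
  by (metis word_class_eqI word_class_self mem_Collect_eq word_class_def word_equiv_sym)

lemma word_class_empty_positions: "fst u = {} \<Longrightarrow> word_class G u = word_class G empty_word"
  by (rule word_class_eqI, rule word_equivI) (simp add: restr_def empty_word_def)

lemma some_in_word_class:
  assumes "is_word G u"
  shows "is_word G (SOME v. v \<in> word_class G u)" "word_equiv G u (SOME v. v \<in> word_class G u)"
proof -
  have "(SOME v. v \<in> word_class G u) \<in> word_class G u"
    using word_class_self[OF assms] by (rule someI)
  then show "is_word G (SOME v. v \<in> word_class G u)" "word_equiv G u (SOME v. v \<in> word_class G u)"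
    by (simp_all add: word_class_def)
qed

lemma carrier_TP: "carrier (TP G) = {word_class G u | u. is_word G u}"
  by (simp add: TP_def)

lemma one_TP: "\<one>\<^bsub>TP G\<^esub> = word_class G empty_word"
  by (simp add: TP_def)

lemma word_class_in_carrier_TP: "is_word G u \<Longrightarrow> word_class G u \<in> carrier (TP G)"
  unfolding carrier_TP by blast

lemma carrier_TP_E:
  assumes "Y \<in> carrier (TP G)"
  obtains u where "is_word G u" "Y = word_class G u"
  using assms by (auto simp: carrier_TP)

lemma mult_TP:
  assumes "is_word G u" "is_word G v"
  shows "word_class G u \<otimes>\<^bsub>TP G\<^esub> word_class G v = word_class G (concat_word u v)"
proof -
  have "word_class G u \<otimes>\<^bsub>TP G\<^esub> word_class G v =
      word_class G (concat_word (SOME x. x \<in> word_class G u) (SOME x. x \<in> word_class G v))"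
    by (simp add: TP_def)
  also have "\<dots> = word_class G (concat_word u v)"
    using some_in_word_class[OF assms(1)] some_in_word_class[OF assms(2)] assms
    by (intro word_class_eqI word_equiv_concat_word) (auto intro: word_equiv_sym)
  finally show ?thesis .
qed

lemma mult_TP_rev_word:
  assumes grp: "\<And>n. group (G n)" and u: "is_word G u"
  shows "word_class G (rev_word G u) \<otimes>\<^bsub>TP G\<^esub> word_class G u = \<one>\<^bsub>TP G\<^esub>"
proof -
  have rev: "is_word G (rev_word G u)" by (rule is_word_rev_word[OF grp u])
  have "fp_eq G (restr m (concat_word (rev_word G u) u)) (restr m empty_word)" for m
  proof -
    have "\<forall>l\<in>set (restr m u). snd l \<in> carrier (G (fst l))"
      using u finite_restr_positions[OF u, of m]
      unfolding is_word_def restr_eq by (auto simp: restr_positions_def)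
    then show ?thesis
      using fp_eq_inv_cancel[OF grp]
      by (simp add: restr_concat_word[OF rev u] restr_rev_word[OF u])
  qed
  then show ?thesis
    using u rev by (simp add: mult_TP one_TP word_class_eqI word_equiv_def)
qed

lemma group_TP:
  assumes grp: "\<And>n. group (G n)"
  shows "group (TP G)"
proof (rule groupI)
  fix A B assume "A \<in> carrier (TP G)" "B \<in> carrier (TP G)"
  then show "A \<otimes>\<^bsub>TP G\<^esub> B \<in> carrier (TP G)"
    by (elim carrier_TP_E) (simp add: mult_TP is_word_concat_word word_class_in_carrier_TP)
next
  show "\<one>\<^bsub>TP G\<^esub> \<in> carrier (TP G)"
    unfolding one_TP by (simp add: word_class_in_carrier_TP)
next
  fix A B C assume "A \<in> carrier (TP G)" "B \<in> carrier (TP G)" "C \<in> carrier (TP G)"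
  then show "A \<otimes>\<^bsub>TP G\<^esub> B \<otimes>\<^bsub>TP G\<^esub> C = A \<otimes>\<^bsub>TP G\<^esub> (B \<otimes>\<^bsub>TP G\<^esub> C)"
    by (elim carrier_TP_E)
      (simp add: mult_TP is_word_concat_word, intro word_class_eqI word_equivI,
       simp add: restr_concat_word[where G=G] is_word_concat_word)
next
  fix A assume "A \<in> carrier (TP G)"
  then show "\<one>\<^bsub>TP G\<^esub> \<otimes>\<^bsub>TP G\<^esub> A = A"
    by (elim carrier_TP_E)
      (simp add: one_TP mult_TP, intro word_class_eqI word_equivI, simp add: restr_concat_word[where G=G])
next
  fix A assume "A \<in> carrier (TP G)"
  then obtain u where u: "is_word G u" "A = word_class G u" by (rule carrier_TP_E)
  then show "\<exists>B\<in>carrier (TP G). B \<otimes>\<^bsub>TP G\<^esub> A = \<one>\<^bsub>TP G\<^esub>"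
    using mult_TP_rev_word[OF grp u(1)] word_class_in_carrier_TP[OF is_word_rev_word[OF grp u(1)]]
    by blast
qed

locale relabelling =
  fixes G H :: "nat \<Rightarrow> 'a monoid" and P :: "nat \<Rightarrow> bool" and \<sigma> :: "nat \<Rightarrow> nat"
  assumes inj: "inj_on \<sigma> {n. P n}"
    and factors: "\<And>n. P n \<Longrightarrow> H (\<sigma> n) = G n"
begin

lemma is_word_relabel: "is_word G u \<Longrightarrow> is_word H (relabel_word P \<sigma> u)"
  by (rule is_word_relabel_word[where H=H, OF inj factors])

lemma relabel_index_bound: "\<exists>M. \<forall>n. P n \<longrightarrow> \<sigma> n \<le> m \<longrightarrow> n \<le> M"
proof -
  have "finite (\<sigma> -` {..m} \<inter> {n. P n})"
    using inj by (rule finite_vimage_IntI[rotated]) simp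
  then obtain M where "\<forall>n\<in>\<sigma> -` {..m} \<inter> {n. P n}. n \<le> M"
    using finite_nat_set_iff_bounded_le by blast
  then show ?thesis by auto
qed

lemma word_equiv_relabel:
  assumes "is_word G u" "is_word G v" "word_equiv G u v"
  shows "word_equiv H (relabel_word P \<sigma> u) (relabel_word P \<sigma> v)"
  unfolding word_equiv_def
proof
  fix m
  obtain M where "\<And>n. P n \<Longrightarrow> \<sigma> n \<le> m \<Longrightarrow> n \<le> M"
    using relabel_index_bound by blast
  note M = restr_relabel_word[where G=G and M=M, OF _ this]
  have "fp_eq H (relabel_letters (\<lambda>n. P n \<and> \<sigma> n \<le> m) \<sigma> (restr M u))
      (relabel_letters (\<lambda>n. P n \<and> \<sigma> n \<le> m) \<sigma> (restr M v))"
    using assms(3) factors by (intro fp_eq_relabel_letters) (auto simp: word_equiv_def)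
  then show "fp_eq H (restr m (relabel_word P \<sigma> u)) (restr m (relabel_word P \<sigma> v))"
    by (simp add: M assms(1,2))
qed

lemma relabel_concat_word:
  assumes "is_word G u" "is_word G v"
  shows "word_equiv H (relabel_word P \<sigma> (concat_word u v))
    (concat_word (relabel_word P \<sigma> u) (relabel_word P \<sigma> v))"
proof (rule word_equivI)
  fix m
  obtain M where "\<And>n. P n \<Longrightarrow> \<sigma> n \<le> m \<Longrightarrow> n \<le> M"
    using relabel_index_bound by blast
  note M = restr_relabel_word[where G=G and M=M, OF _ this]
  show "restr m (relabel_word P \<sigma> (concat_word u v)) =
      restr m (concat_word (relabel_word P \<sigma> u) (relabel_word P \<sigma> v))"
    using assms
    by (simp add: M is_word_concat_word restr_concat_word[where G=G]
        restr_concat_word[OF is_word_relabel is_word_relabel])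
qed

lemma relabel_class:
  assumes "is_word G u"
  shows "word_class H (relabel_word P \<sigma> (SOME v. v \<in> word_class G u)) = word_class H (relabel_word P \<sigma> u)"
  using some_in_word_class[OF assms] assms
  by (intro word_class_eqI word_equiv_relabel) (auto intro: word_equiv_sym)

lemma relabel_hom: "(\<lambda>Y. word_class H (relabel_word P \<sigma> (SOME u. u \<in> Y))) \<in> hom (TP G) (TP H)"
proof (rule homI)
  fix Y assume "Y \<in> carrier (TP G)"
  then show "word_class H (relabel_word P \<sigma> (SOME u. u \<in> Y)) \<in> carrier (TP H)"
    by (elim carrier_TP_E) (simp add: relabel_class is_word_relabel word_class_in_carrier_TP)
next
  fix Y Z assume "Y \<in> carrier (TP G)" "Z \<in> carrier (TP G)"
  then show "word_class H (relabel_word P \<sigma> (SOME u. u \<in> Y \<otimes>\<^bsub>TP G\<^esub> Z)) =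
      word_class H (relabel_word P \<sigma> (SOME u. u \<in> Y)) \<otimes>\<^bsub>TP H\<^esub> word_class H (relabel_word P \<sigma> (SOME u. u \<in> Z))"
    by (elim carrier_TP_E)
      (simp add: mult_TP is_word_concat_word relabel_class is_word_relabel word_class_eqI relabel_concat_word)
qed

end

section \<open>Deleting letters modulo a normal closure\<close>

lemma (in group) normal_closure_subset:
  "S \<subseteq> carrier G \<Longrightarrow> normal_closure G S \<subseteq> carrier G"
  unfolding normal_closure_def by (rule generate_incl) auto

lemma (in group) conj_in_normal_closure:
  "g \<in> carrier G \<Longrightarrow> s \<in> S \<Longrightarrow> g \<otimes> s \<otimes> inv g \<in> normal_closure G S"
  unfolding normal_closure_def by (rule generate.incl) blast

lemma (in group) normal_closure_normal:
  assumes "S \<subseteq> carrier G"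
  shows "normal_closure G S \<lhd> G"
  unfolding normal_closure_def
proof (rule normal_generateI)
  show "{g \<otimes> s \<otimes> inv g |g s. g \<in> carrier G \<and> s \<in> S} \<subseteq> carrier G"
    using assms by auto
next
  fix h g assume "h \<in> {g \<otimes> s \<otimes> inv g |g s. g \<in> carrier G \<and> s \<in> S}" "g \<in> carrier G"
  then obtain a s where as: "a \<in> carrier G" "s \<in> S" "h = a \<otimes> s \<otimes> inv a" "g \<in> carrier G"
    by blast
  then have "g \<otimes> h \<otimes> inv g = (g \<otimes> a) \<otimes> s \<otimes> inv (g \<otimes> a)"
    using assms by (auto simp: inv_mult_group m_assoc)
  then show "g \<otimes> h \<otimes> inv g \<in> {g \<otimes> s \<otimes> inv g |g s. g \<in> carrier G \<and> s \<in> S}"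
    using as by blast
qed

lemma (in group_hom) normal_closure_subset_kernel:
  assumes "S \<subseteq> carrier G" "\<And>s. s \<in> S \<Longrightarrow> h s = \<one>\<^bsub>H\<^esub>"
  shows "normal_closure G S \<subseteq> kernel G H h"
  unfolding normal_closure_def
proof (rule G.generate_subgroup_incl[OF _ normal_imp_subgroup[OF normal_kernel]])
  show "{g \<otimes> s \<otimes> inv g |g s. g \<in> carrier G \<and> s \<in> S} \<subseteq> kernel G H h"
    using assms by (auto simp: kernel_def)
qed

lemma word_class_split_at:
  assumes "is_word H u" "p \<in> fst u"
  defines "L \<equiv> word_class H (restrict_word u {x. x < p})"
    and "R \<equiv> word_class H (restrict_word u {x. p < x})"
  shows "word_class H u = L \<otimes>\<^bsub>TP H\<^esub> word_class H (letter_word (snd u p)) \<otimes>\<^bsub>TP H\<^esub> R"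
    and "word_class H (restrict_word u (- {p})) = L \<otimes>\<^bsub>TP H\<^esub> R"
proof -
  let ?L = "restrict_word u {x. x < p}" and ?R = "restrict_word u {x. p < x}"
    and ?u' = "restrict_word u (- {p})"
  have words: "is_word H ?L" "is_word H ?R" "is_word H ?u'"
    using assms(1) by (simp_all add: is_word_restrict_word)
  have letter: "is_word H (letter_word (snd u p))"
    using assms(1,2) by (intro is_word_letter_word) (auto simp: is_word_def)
  show "word_class H u = L \<otimes>\<^bsub>TP H\<^esub> word_class H (letter_word (snd u p)) \<otimes>\<^bsub>TP H\<^esub> R"
    unfolding L_def R_def using words letter
    by (simp add: mult_TP is_word_concat_word, intro word_class_eqI word_equivI)
      (simp add: restr_split[OF assms(1), of _ p] assms(2) restr_concat_word[where G=H]
        is_word_concat_word restr_letter_word)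
  have parts: "restrict_word ?u' {x. x < p} = ?L" "restrict_word ?u' {x. p < x} = ?R"
    by (auto simp: restrict_word_def)
  have "restr m ?u' = restr m ?L @ restr m ?R" for m
    using restr_split[OF words(3), of m p] unfolding parts by (simp add: restrict_word_def)
  then show "word_class H ?u' = L \<otimes>\<^bsub>TP H\<^esub> R"
    unfolding L_def R_def using words
    by (simp add: mult_TP restr_concat_word[where G=H] word_class_eqI word_equivI)
qed

lemma word_class_delete_positions:
  assumes grp: "\<And>n. group (H n)" and u: "is_word H u" and "finite Z" "Z \<subseteq> fst u"
    and letters: "\<And>z. z \<in> Z \<Longrightarrow> word_class H (letter_word (snd u z)) \<in> S"
    and S: "S \<subseteq> carrier (TP H)"
  shows "\<exists>c\<in>normal_closure (TP H) S. word_class H u = c \<otimes>\<^bsub>TP H\<^esub> word_class H (restrict_word u (- Z))"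
  using \<open>finite Z\<close> \<open>Z \<subseteq> fst u\<close> letters
proof (induction Z rule: finite_induct)
  case empty
  interpret T: group "TP H" by (rule group_TP[OF grp])
  have "restrict_word u (- {}) = u" by (simp add: restrict_word_def)
  then show ?case
    using T.normal_closure_normal[OF S] word_class_in_carrier_TP[OF u]
    by (intro bexI[of _ "\<one>\<^bsub>TP H\<^esub>"]) (auto intro: subgroup.one_closed normal_imp_subgroup)
next
  case (insert z F)
  interpret T: group "TP H" by (rule group_TP[OF grp])
  interpret N: normal "normal_closure (TP H) S" "TP H" by (rule T.normal_closure_normal[OF S])
  obtain c where c: "c \<in> normal_closure (TP H) S"
    "word_class H u = c \<otimes>\<^bsub>TP H\<^esub> word_class H (restrict_word u (- F))"
    using insert by auto
  let ?u = "restrict_word u (- F)"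
  let ?L = "word_class H (restrict_word ?u {x. x < z})"
    and ?R = "word_class H (restrict_word ?u {x. z < x})"
    and ?s = "word_class H (letter_word (snd ?u z))"
  have "z \<in> fst ?u" using insert by (auto simp: restrict_word_def)
  note split = word_class_split_at[OF is_word_restrict_word[OF u] this]
  have carrier: "?L \<in> carrier (TP H)" "?R \<in> carrier (TP H)" "c \<in> carrier (TP H)"
    using u c(1) N.subset by (auto intro: word_class_in_carrier_TP is_word_restrict_word)
  have s: "?s \<in> S" using insert by (simp add: restrict_word_def)
  then have conj: "?L \<otimes>\<^bsub>TP H\<^esub> ?s \<otimes>\<^bsub>TP H\<^esub> inv\<^bsub>TP H\<^esub> ?L \<in> normal_closure (TP H) S"
    using carrier by (intro T.conj_in_normal_closure)
  have "restrict_word ?u (- {z}) = restrict_word u (- insert z F)"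
    by (auto simp: restrict_word_def)
  then have "word_class H (restrict_word u (- insert z F)) = ?L \<otimes>\<^bsub>TP H\<^esub> ?R"
    using split(2) by simp
  \<comment> \<open>\<open>L s R = (L s L\<inverse>) (L R)\<close>: deleting a letter multiplies by a conjugate of it\<close>
  moreover have "word_class H u =
      (c \<otimes>\<^bsub>TP H\<^esub> (?L \<otimes>\<^bsub>TP H\<^esub> ?s \<otimes>\<^bsub>TP H\<^esub> inv\<^bsub>TP H\<^esub> ?L)) \<otimes>\<^bsub>TP H\<^esub> (?L \<otimes>\<^bsub>TP H\<^esub> ?R)"
  proof -
    have "inv\<^bsub>TP H\<^esub> ?L \<otimes>\<^bsub>TP H\<^esub> (?L \<otimes>\<^bsub>TP H\<^esub> ?R) = ?R"
      using carrier by (simp add: T.m_assoc[symmetric])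
    then show ?thesis
      unfolding c(2) split(1) using carrier s S by (auto simp: T.m_assoc)
  qed
  moreover have "c \<otimes>\<^bsub>TP H\<^esub> (?L \<otimes>\<^bsub>TP H\<^esub> ?s \<otimes>\<^bsub>TP H\<^esub> inv\<^bsub>TP H\<^esub> ?L) \<in> normal_closure (TP H) S"
    using c(1) conj by (rule N.m_closed)
  ultimately show ?case by auto
qed

section \<open>The bonding maps\<close>

lemma del_word_eq_relabel: "del_word = relabel_word (\<lambda>n. n \<noteq> 0) (\<lambda>n. n - 1)"
  by (simp add: fun_eq_iff del_word_def relabel_word_def)

lemma shift_word_eq_relabel: "shift_word k = relabel_word (\<lambda>_. True) (\<lambda>n. n + k)"
  by (simp add: fun_eq_iff shift_word_def relabel_word_def)

lemma relabelling_del: "(\<And>i. H i = G (Suc i)) \<Longrightarrow> relabelling G H (\<lambda>n. n \<noteq> 0) (\<lambda>n. n - 1)"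
  by unfold_locales (auto simp: inj_on_def)

lemma relabelling_shift: "(\<And>i. G i = H (i + k)) \<Longrightarrow> relabelling G H (\<lambda>_. True) (\<lambda>n. n + k)"
  by unfold_locales (auto simp: inj_on_def)

lemma is_word_del_word: "(\<And>i. H i = G (Suc i)) \<Longrightarrow> is_word G u \<Longrightarrow> is_word H (del_word u)"
  unfolding del_word_eq_relabel by (rule relabelling.is_word_relabel[OF relabelling_del])

lemma is_word_shift_word: "(\<And>i. G i = H (i + k)) \<Longrightarrow> is_word G u \<Longrightarrow> is_word H (shift_word k u)"
  unfolding shift_word_eq_relabel by (rule relabelling.is_word_relabel[OF relabelling_shift])

lemma word_equiv_shift_word:
  "(\<And>i. G i = H (i + k)) \<Longrightarrow> is_word G u \<Longrightarrow> is_word G v \<Longrightarrow> word_equiv G u v \<Longrightarrow>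
    word_equiv H (shift_word k u) (shift_word k v)"
  unfolding shift_word_eq_relabel by (rule relabelling.word_equiv_relabel[OF relabelling_shift])

lemma word_equiv_empty_if_del_word:
  assumes "\<And>i. H i = G (Suc i)" "is_word G u" "\<And>x. x \<in> fst u \<Longrightarrow> fst (snd u x) \<noteq> 0"
    and "word_equiv H (del_word u) empty_word"
  shows "word_equiv G u empty_word"
proof -
  have del: "is_word H (del_word u)" using assms(1,2) by (rule is_word_del_word)
  have "word_equiv G (shift_word 1 (del_word u)) (shift_word 1 empty_word)"
    by (rule word_equiv_shift_word[OF _ del is_word_empty_word assms(4)]) (simp add: assms(1))
  moreover have "restr m (shift_word 1 (del_word u)) = restr m u" for m
    using assms(3) by (intro restr_cong) (auto simp: shift_word_def del_word_def)
  moreover have "restr m (shift_word 1 empty_word) = []" for m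
    by (simp add: restr_def shift_word_def empty_word_def)
  ultimately show ?thesis
    unfolding word_equiv_def restr_empty_word by metis
qed

lemma group_TPk: "(\<And>n. group (G n)) \<Longrightarrow> group (TPk G k)"
  unfolding TPk_def by (rule group_TP)

lemma phi_eq:
  "phi G k = (\<lambda>Y. word_class (\<lambda>i. G (i + Suc k)) (relabel_word (\<lambda>n. n \<noteq> 0) (\<lambda>n. n - 1) (SOME u. u \<in> Y)))"
  by (simp add: fun_eq_iff phi_def del_word_eq_relabel)

lemma phi_class:
  "is_word (\<lambda>i. G (i + k)) u \<Longrightarrow>
    phi G k (word_class (\<lambda>i. G (i + k)) u) = word_class (\<lambda>i. G (i + Suc k)) (del_word u)"
  unfolding phi_eq del_word_eq_relabel
  by (rule relabelling.relabel_class[OF relabelling_del[where G="\<lambda>i. G (i + k)"]]) simp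

lemma phi_hom: "phi G k \<in> hom (TPk G k) (TPk G (Suc k))"
  unfolding phi_eq TPk_def
  by (rule relabelling.relabel_hom[OF relabelling_del[where G="\<lambda>i. G (i + k)"]]) simp

lemma phi_surj: "phi G k ` carrier (TPk G k) = carrier (TPk G (Suc k))"
proof
  show "phi G k ` carrier (TPk G k) \<subseteq> carrier (TPk G (Suc k))"
    using phi_hom by (auto simp: hom_def)
next
  show "carrier (TPk G (Suc k)) \<subseteq> phi G k ` carrier (TPk G k)"
  proof
    fix Y assume "Y \<in> carrier (TPk G (Suc k))"
    then obtain v where v: "is_word (\<lambda>i. G (i + Suc k)) v" "Y = word_class (\<lambda>i. G (i + Suc k)) v"
      unfolding TPk_def by (rule carrier_TP_E)
    have w: "is_word (\<lambda>i. G (i + k)) (shift_word 1 v)"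
      using v(1) by (rule is_word_shift_word[rotated]) simp
    have "phi G k (word_class (\<lambda>i. G (i + k)) (shift_word 1 v)) =
        word_class (\<lambda>i. G (i + Suc k)) (del_word (shift_word 1 v))"
      by (rule phi_class[OF w])
    also have "del_word (shift_word 1 v) = v"
      by (simp add: del_word_def shift_word_def)
    finally have "phi G k (word_class (\<lambda>i. G (i + k)) (shift_word 1 v)) = Y"
      unfolding v(2) .
    moreover have "word_class (\<lambda>i. G (i + k)) (shift_word 1 v) \<in> carrier (TPk G k)"
      unfolding TPk_def by (rule word_class_in_carrier_TP[OF w])
    ultimately show "Y \<in> phi G k ` carrier (TPk G k)" by blast
  qed
qed

lemma factor_image_eq:
  "factor_image G k = {word_class (\<lambda>i. G (i + k)) (letter_word (0, g)) | g. g \<in> carrier (G k) - {\<one>\<^bsub>G k\<^esub>}}"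
  by (simp add: factor_image_def letter_word_def)

lemma factor_image_subset: "factor_image G k \<subseteq> carrier (TPk G k)"
  unfolding factor_image_eq TPk_def by (auto intro!: word_class_in_carrier_TP is_word_letter_word)

lemma letter_word_in_factor_image:
  assumes "is_word (\<lambda>i. G (i + k)) u" "z \<in> fst u" "fst (snd u z) = 0"
  shows "word_class (\<lambda>i. G (i + k)) (letter_word (snd u z)) \<in> factor_image G k"
proof -
  have "snd u z = (0, snd (snd u z))" using assms(3) by (simp add: prod_eq_iff)
  then show ?thesis
    using assms unfolding factor_image_eq is_word_def by (auto intro!: exI[of _ "snd (snd u z)"])
qed

lemma phi_factor_image: "s \<in> factor_image G k \<Longrightarrow> phi G k s = \<one>\<^bsub>TPk G (Suc k)\<^esub>"
proof -
  assume "s \<in> factor_image G k"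
  then obtain g where g: "g \<in> carrier (G k) - {\<one>\<^bsub>G k\<^esub>}"
    and s: "s = word_class (\<lambda>i. G (i + k)) (letter_word (0, g))"
    unfolding factor_image_eq by blast
  have "phi G k s = word_class (\<lambda>i. G (i + Suc k)) (del_word (letter_word (0, g)))"
    unfolding s using g by (intro phi_class is_word_letter_word) simp
  also have "\<dots> = \<one>\<^bsub>TPk G (Suc k)\<^esub>"
    unfolding TPk_def one_TP by (rule word_class_empty_positions) (simp add: del_word_def letter_word_def)
  finally show ?thesis .
qed

lemma kernel_phi_subset:
  assumes grp: "\<And>n. group (G n)"
  shows "kernel (TPk G k) (TPk G (Suc k)) (phi G k) \<subseteq> normal_closure (TPk G k) (factor_image G k)"
proof
  interpret T: group "TPk G k" by (rule group_TPk[OF grp])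
  let ?H = "\<lambda>i. G (i + k)" and ?H' = "\<lambda>i. G (i + Suc k)"
  fix Y assume Y: "Y \<in> kernel (TPk G k) (TPk G (Suc k)) (phi G k)"
  then obtain u where u: "is_word ?H u" "Y = word_class ?H u"
    unfolding kernel_def TPk_def by (auto elim: carrier_TP_E)
  let ?Z = "{x\<in>fst u. fst (snd u x) = 0}"
  let ?u0 = "restrict_word u (- ?Z)"
  have "finite ?Z" using u(1) by (simp add: is_word_def)
  moreover have "word_class ?H (letter_word (snd u z)) \<in> factor_image G k" if "z \<in> ?Z" for z
    using that u(1) by (intro letter_word_in_factor_image) auto
  ultimately have "\<exists>c\<in>normal_closure (TPk G k) (factor_image G k). Y = c \<otimes>\<^bsub>TPk G k\<^esub> word_class ?H ?u0"
    unfolding TPk_def u(2) using grp factor_image_subset[of G k, unfolded TPk_def]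
    by (intro word_class_delete_positions[OF _ u(1)]) auto
  then obtain c where c: "c \<in> normal_closure (TPk G k) (factor_image G k)"
    "Y = c \<otimes>\<^bsub>TPk G k\<^esub> word_class ?H ?u0"
    by blast
  have u0: "is_word ?H ?u0" using u(1) by (rule is_word_restrict_word)
  have "del_word ?u0 = del_word u"
    by (auto simp: del_word_def restrict_word_def)
  then have "word_class ?H' (del_word ?u0) = word_class ?H' empty_word"
    using Y u by (simp add: kernel_def phi_class TPk_def one_TP)
  then have "word_equiv ?H ?u0 empty_word"
    by (intro word_equiv_empty_if_del_word[where H="?H'", OF _ u0])
      (auto simp: word_class_eq_iff restrict_word_def)
  then have "word_class ?H ?u0 = \<one>\<^bsub>TPk G k\<^esub>"
    by (simp add: TPk_def one_TP word_class_eqI)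
  moreover have "c \<in> carrier (TPk G k)"
    using c(1) T.normal_closure_subset[OF factor_image_subset] by blast
  ultimately show "Y \<in> normal_closure (TPk G k) (factor_image G k)"
    using c by simp
qed

lemma phi_kernel:
  assumes grp: "\<And>n. group (G n)"
  shows "kernel (TPk G k) (TPk G (Suc k)) (phi G k) = normal_closure (TPk G k) (factor_image G k)"
proof
  interpret group_hom "TPk G k" "TPk G (Suc k)" "phi G k"
    using grp by (simp add: group_hom_def group_hom_axioms_def group_TPk phi_hom)
  show "normal_closure (TPk G k) (factor_image G k) \<subseteq> kernel (TPk G k) (TPk G (Suc k)) (phi G k)"
    by (rule normal_closure_subset_kernel[OF factor_image_subset phi_factor_image])
qed (rule kernel_phi_subset[OF grp])

section \<open>The archipelago group as a direct limit\<close>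

lemma FP_subset: "FP G \<subseteq> carrier (TP G)"
  unfolding FP_def carrier_TP by blast

lemma letter_word_in_FP:
  "snd l \<in> carrier (G (fst l)) - {\<one>\<^bsub>G (fst l)\<^esub>} \<Longrightarrow> word_class G (letter_word l) \<in> FP G"
  unfolding FP_def using is_word_letter_word by (fastforce simp: letter_word_def)

lemma normal_closure_FP: "(\<And>n. group (G n)) \<Longrightarrow> normal_closure (TP G) (FP G) \<lhd> TP G"
  by (rule group.normal_closure_normal[OF group_TP FP_subset])

lemma group_archipelago: "(\<And>n. group (G n)) \<Longrightarrow> group (archipelago G)"
  unfolding archipelago_def by (rule normal.factorgroup_is_group[OF normal_closure_FP])

lemma psi_eq:
  "psi G k = (\<lambda>Y. normal_closure (TP G) (FP G) #>\<^bsub>TP G\<^esub>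
     word_class G (relabel_word (\<lambda>_. True) (\<lambda>n. n + k) (SOME u. u \<in> Y)))"
  by (simp add: fun_eq_iff psi_def shift_word_eq_relabel)

lemma psi_class:
  "is_word (\<lambda>i. G (i + k)) u \<Longrightarrow>
    psi G k (word_class (\<lambda>i. G (i + k)) u) = normal_closure (TP G) (FP G) #>\<^bsub>TP G\<^esub> word_class G (shift_word k u)"
  unfolding psi_eq shift_word_eq_relabel
  by (subst relabelling.relabel_class[OF relabelling_shift[where G="\<lambda>i. G (i + k)"]]) simp_all

lemma psi_0: "Y \<in> carrier (TP G) \<Longrightarrow> psi G 0 Y = normal_closure (TP G) (FP G) #>\<^bsub>TP G\<^esub> Y"
  by (elim carrier_TP_E) (simp add: psi_class[where k=0, simplified] shift_word_def)

lemma psi_hom: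
  assumes grp: "\<And>n. group (G n)"
  shows "psi G k \<in> hom (TPk G k) (archipelago G)"
proof -
  interpret N: normal "normal_closure (TP G) (FP G)" "TP G" by (rule normal_closure_FP[OF grp])
  have "(\<lambda>Y. word_class G (relabel_word (\<lambda>_. True) (\<lambda>n. n + k) (SOME u. u \<in> Y))) \<in> hom (TPk G k) (TP G)"
    unfolding TPk_def by (rule relabelling.relabel_hom[OF relabelling_shift]) simp
  from hom_compose[OF this N.r_coset_hom_Mod] show ?thesis
    unfolding psi_eq archipelago_def by (simp add: comp_def)
qed

lemma psi_phi:
  assumes grp: "\<And>n. group (G n)" and Y: "Y \<in> carrier (TPk G k)"
  shows "psi G (Suc k) (phi G k Y) = psi G k Y"
proof -
  interpret T: group "TP G" by (rule group_TP[OF grp])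
  interpret N: normal "normal_closure (TP G) (FP G)" "TP G" by (rule normal_closure_FP[OF grp])
  obtain u where u: "is_word (\<lambda>i. G (i + k)) u" "Y = word_class (\<lambda>i. G (i + k)) u"
    using Y unfolding TPk_def by (rule carrier_TP_E)
  let ?w = "shift_word k u" and ?Z = "{x\<in>fst u. fst (snd u x) = 0}"
  have w: "is_word G ?w" using u(1) by (rule is_word_shift_word[rotated]) simp
  have del: "is_word (\<lambda>i. G (i + Suc k)) (del_word u)" using u(1) by (rule is_word_del_word[rotated]) simp
  then have v: "is_word G (shift_word (Suc k) (del_word u))" by (rule is_word_shift_word[rotated]) simp
  have "word_class G (letter_word (snd ?w z)) \<in> FP G" if "z \<in> ?Z" for z
    using w that by (intro letter_word_in_FP) (auto simp: is_word_def shift_word_def)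
  then obtain c where c: "c \<in> normal_closure (TP G) (FP G)"
    "word_class G ?w = c \<otimes>\<^bsub>TP G\<^esub> word_class G (restrict_word ?w (- ?Z))"
    using word_class_delete_positions[OF grp w, of ?Z "FP G"] u(1) FP_subset
    by (auto simp: is_word_def shift_word_def)
  have "restr m (restrict_word ?w (- ?Z)) = restr m (shift_word (Suc k) (del_word u))" for m
    by (rule restr_cong) (auto simp: restrict_word_def shift_word_def del_word_def)
  then have "word_class G (restrict_word ?w (- ?Z)) = word_class G (shift_word (Suc k) (del_word u))"
    by (intro word_class_eqI word_equivI)
  with c(2) have c': "word_class G ?w = c \<otimes>\<^bsub>TP G\<^esub> word_class G (shift_word (Suc k) (del_word u))"
    by simp
  have c_carrier: "c \<in> carrier (TP G)" using c(1) N.subset by blast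
  have "psi G k Y = normal_closure (TP G) (FP G) #>\<^bsub>TP G\<^esub>
      (c \<otimes>\<^bsub>TP G\<^esub> word_class G (shift_word (Suc k) (del_word u)))"
    unfolding u(2) psi_class[OF u(1)] c' ..
  also have "\<dots> = (normal_closure (TP G) (FP G) #>\<^bsub>TP G\<^esub> c) #>\<^bsub>TP G\<^esub>
      word_class G (shift_word (Suc k) (del_word u))"
    using N.subset c_carrier word_class_in_carrier_TP[OF v] by (simp add: T.coset_mult_assoc)
  also have "\<dots> = psi G (Suc k) (phi G k Y)"
    unfolding u(2) phi_class[OF u(1)] psi_class[OF del]
    using T.coset_join2[OF c_carrier N.subgroup_axioms c(1)] by simp
  finally show ?thesis by simp
qed

context
  fixes G :: "nat \<Rightarrow> 'a monoid" and K :: "'b monoid" and f :: "nat \<Rightarrow> 'a iword set \<Rightarrow> 'b"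
  assumes grp: "\<And>n. group (G n)" and K: "group K"
    and f_hom: "\<And>k. f k \<in> hom (TPk G k) K"
    and f_phi: "\<And>k Y. Y \<in> carrier (TPk G k) \<Longrightarrow> f (Suc k) (phi G k Y) = f k Y"
begin

lemma compatible_shift_word:
  "is_word (\<lambda>i. G (i + (k + j))) u \<Longrightarrow>
    f k (word_class (\<lambda>i. G (i + k)) (shift_word j u)) = f (k + j) (word_class (\<lambda>i. G (i + (k + j))) u)"
proof (induction j arbitrary: k)
  case 0
  then show ?case by (simp add: shift_word_def)
next
  case (Suc j)
  have w: "is_word (\<lambda>i. G (i + k)) (shift_word (Suc j) u)"
    using Suc.prems by (rule is_word_shift_word[rotated]) (simp add: ac_simps)
  have "del_word (shift_word (Suc j) u) = shift_word j u"
    by (simp add: del_word_def shift_word_def)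
  then have "f k (word_class (\<lambda>i. G (i + k)) (shift_word (Suc j) u)) =
      f (Suc k) (word_class (\<lambda>i. G (i + Suc k)) (shift_word j u))"
    using f_phi[of "word_class (\<lambda>i. G (i + k)) (shift_word (Suc j) u)" k] w
    by (simp add: phi_class TPk_def word_class_in_carrier_TP)
  also have "\<dots> = f (Suc k + j) (word_class (\<lambda>i. G (i + (Suc k + j))) u)"
    using Suc.prems unfolding add_Suc_shift[of k j, symmetric] by (rule Suc.IH)
  finally show ?case unfolding add_Suc_shift[of k j] .
qed

lemma compatible_kills_finite_word:
  assumes "is_word (\<lambda>i. G (i + k)) u" "finite (fst u)"
  shows "f k (word_class (\<lambda>i. G (i + k)) u) = \<one>\<^bsub>K\<^esub>"
proof -
  obtain j where "\<forall>x\<in>fst u. fst (snd u x) < j"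
    using assms(2) finite_nat_set_iff_bounded[of "(\<lambda>x. fst (snd u x)) ` fst u"] by auto
  with assms show ?thesis
  proof (induction j arbitrary: k u)
    case 0
    then have "word_class (\<lambda>i. G (i + k)) u = \<one>\<^bsub>TPk G k\<^esub>"
      by (simp add: TPk_def one_TP word_class_empty_positions)
    then show ?case
      using group_hom.hom_one[of "TPk G k" K "f k"] group_TPk[OF grp] K f_hom
      by (simp add: group_hom_def group_hom_axioms_def)
  next
    case (Suc j)
    have del: "is_word (\<lambda>i. G (i + Suc k)) (del_word u)"
      using Suc.prems(1) by (rule is_word_del_word[rotated]) simp
    have "f k (word_class (\<lambda>i. G (i + k)) u) = f (Suc k) (word_class (\<lambda>i. G (i + Suc k)) (del_word u))"
      using f_phi[of "word_class (\<lambda>i. G (i + k)) u" k] Suc.prems(1)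
      by (simp add: phi_class TPk_def word_class_in_carrier_TP)
    also have "\<dots> = \<one>\<^bsub>K\<^esub>"
      using Suc.prems by (intro Suc.IH[OF del]) (auto simp: del_word_def)
    finally show ?case .
  qed
qed

lemma FP_subset_kernel: "FP G \<subseteq> kernel (TP G) K (f 0)"
proof
  fix Y assume "Y \<in> FP G"
  then obtain u where u: "is_word G u" "finite (fst u)" "Y = word_class G u"
    unfolding FP_def by blast
  then show "Y \<in> kernel (TP G) K (f 0)"
    using compatible_kills_finite_word[of 0 u]
    by (simp add: kernel_def word_class_in_carrier_TP)
qed

lemma archipelago_universal:
  "\<exists>h. h \<in> hom (archipelago G) K \<and>
     (\<forall>k. \<forall>Y\<in>carrier (TPk G k). h (psi G k Y) = f k Y) \<and>
     (\<forall>h'. h' \<in> hom (archipelago G) K \<and> (\<forall>k. \<forall>Y\<in>carrier (TPk G k). h' (psi G k Y) = f k Y) \<longrightarrow>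
       (\<forall>x\<in>carrier (archipelago G). h' x = h x))"
proof -
  let ?N = "normal_closure (TP G) (FP G)"
  interpret f0: group_hom "TP G" K "f 0"
    using group_TP[OF grp] K f_hom[of 0] by (simp add: group_hom_def group_hom_axioms_def TPk_def)
  obtain h where h: "h \<in> hom (archipelago G) K" "\<And>Y. Y \<in> carrier (TP G) \<Longrightarrow> h (?N #>\<^bsub>TP G\<^esub> Y) = f 0 Y"
    unfolding archipelago_def
    by (rule f0.FactGroup_universal_kernel[OF normal_closure_FP[OF grp]
          f0.normal_closure_subset_kernel[OF FP_subset]])
      (use FP_subset_kernel in \<open>auto simp: kernel_def\<close>)
  have "h (psi G k Y) = f k Y" if Y: "Y \<in> carrier (TPk G k)" for k Y
  proof -
    obtain u where u: "is_word (\<lambda>i. G (i + k)) u" "Y = word_class (\<lambda>i. G (i + k)) u"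
      using Y unfolding TPk_def by (rule carrier_TP_E)
    have "is_word G (shift_word k u)" using u(1) by (rule is_word_shift_word[rotated]) simp
    then show ?thesis
      using compatible_shift_word[of 0 k u] u by (simp add: psi_class h(2) word_class_in_carrier_TP)
  qed
  moreover have "h' x = h x"
    if agree: "\<forall>k. \<forall>Y\<in>carrier (TPk G k). h' (psi G k Y) = f k Y"
      and x: "x \<in> carrier (archipelago G)" for h' x
  proof -
    obtain Y where Y: "Y \<in> carrier (TP G)" "x = ?N #>\<^bsub>TP G\<^esub> Y"
      using x by (auto simp: archipelago_def carrier_FactGroup)
    have "h' x = h' (psi G 0 Y)" using Y by (simp add: psi_0)
    also have "\<dots> = f 0 Y" using agree Y(1) by (simp add: TPk_def)
    also have "\<dots> = h x" using Y by (simp add: h(2))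
    finally show ?thesis .
  qed
  ultimately show ?thesis using h(1) by blast
qed

end

theorem proposition14:
  fixes G :: "nat \<Rightarrow> 'a monoid"
  assumes grp: "\<And>n. group (G n)"
  shows "group (archipelago G) \<and>
    (\<forall>k. group (TPk G k) \<and>
         phi G k \<in> hom (TPk G k) (TPk G (Suc k)) \<and>
         phi G k ` carrier (TPk G k) = carrier (TPk G (Suc k)) \<and>
         kernel (TPk G k) (TPk G (Suc k)) (phi G k) = normal_closure (TPk G k) (factor_image G k)) \<and>
    (\<forall>k. psi G k \<in> hom (TPk G k) (archipelago G) \<and>
         (\<forall>Y\<in>carrier (TPk G k). psi G (Suc k) (phi G k Y) = psi G k Y)) \<and>
    (\<forall>(K :: 'b monoid) f. group K \<and> (\<forall>k. f k \<in> hom (TPk G k) K) \<and>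
        (\<forall>k. \<forall>Y\<in>carrier (TPk G k). f (Suc k) (phi G k Y) = f k Y) \<longrightarrow>
       (\<exists>h. h \<in> hom (archipelago G) K \<and>
            (\<forall>k. \<forall>Y\<in>carrier (TPk G k). h (psi G k Y) = f k Y) \<and>
            (\<forall>h'. h' \<in> hom (archipelago G) K \<and>
                  (\<forall>k. \<forall>Y\<in>carrier (TPk G k). h' (psi G k Y) = f k Y) \<longrightarrow>
                  (\<forall>x\<in>carrier (archipelago G). h' x = h x))))"
  by (auto simp: group_archipelago[OF grp] group_TPk[OF grp] phi_hom phi_surj phi_kernel[OF grp]
      psi_hom[OF grp] psi_phi[OF grp] intro!: archipelago_universal[OF grp])

end
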